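(* Let $N\ge1$, $\sigma\ge0$, and let $(x_i(t),v_i(t))_{i=1}^N$, $t\ge 0$, be a solution of $$\dot x_i=v_i,\qquad \dot v_i=-\frac{\|v_i\|^2}{\|x_i\|^2}x_i+\sum_{j=1}^N\frac{\psi_{ij}}{N}\big(R(x_j,x_i)v_j-v_i\big)+\sum_{k=1}^N\frac{\sigma}{N}\big(\|x_i\|^2x_k-\langle x_i,x_k\rangle x_i\big),$$ where the $\psi_{ij}$ are nonnegative bounded functions for all $i,j\in\{1,\dots,N\}$. Assume the initial data satisfy $\langle v_i(0),x_i(0)\rangle=0$ and $\|x_i(0)\|=1$ for all $i$. Then for all $i\in\{1,\dots,N\}$ and all $t>0$, $$\langle v_i(t),x_i(t)\rangle=0\quad\text{and}\quad \|x_i(t)\|=1.$$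
   Context: $\|\cdot\|$ is the Euclidean norm and $\langle\cdot,\cdot\rangle$ the standard inner product on $\mathbb{R}^3$; $\mathbb{S}^2$ is the unit sphere. For column vectors $x_1,x_2\in\mathbb{S}^2$ with $x_1\neq -x_2$, the rotation matrix is $R(x_1,x_2)=I$ if $x_1=x_2$, and otherwise $$R(x_1,x_2)=\langle x_1,x_2\rangle I-x_1x_2^T+x_2x_1^T+(1-\langle x_1,x_2\rangle)\,u u^T,\qquad u=\frac{x_1\times x_2}{\|x_1\times x_2\|}.$$ When $x_j=-x_i$ the term $\psi_{ij}R(x_j,x_i)v_j$ is taken to be $0$. *)

theory Defs
  imports "HOL-Analysis.Analysis" "HOL-Analysis.Cross3"
begin

definition outer3 :: "real^3 \<Rightarrow> real^3 \<Rightarrow> real^3^3" where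
  "outer3 a b = (\<chi> i j. a $ i * b $ j)"

definition rotR :: "real^3 \<Rightarrow> real^3 \<Rightarrow> real^3^3" where
  "rotR x1 x2 =
     (if x1 = x2 then mat 1
      else (let u = (1 / norm (cross3 x1 x2)) *\<^sub>R cross3 x1 x2 in
            (x1 \<bullet> x2) *\<^sub>R mat 1 - outer3 x1 x2 + outer3 x2 x1
            + (1 - x1 \<bullet> x2) *\<^sub>R outer3 u u))"

text \<open>The term psi_ij R(x_j,x_i) v_j, taken to be 0 when x_j = -x_i.\<close>
definition align_term :: "real \<Rightarrow> real^3 \<Rightarrow> real^3 \<Rightarrow> real^3 \<Rightarrow> real^3" where
  "align_term p xj xi vj = (if xj = - xi then 0 else p *\<^sub>R (rotR xj xi *v vj))"

definition vfield ::
  "nat \<Rightarrow> real \<Rightarrow> (nat \<Rightarrow> nat \<Rightarrow> real \<Rightarrow> real) \<Rightarrow> (nat \<Rightarrow> real \<Rightarrow> real^3)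
     \<Rightarrow> (nat \<Rightarrow> real \<Rightarrow> real^3) \<Rightarrow> nat \<Rightarrow> real \<Rightarrow> real^3" where
  "vfield N \<sigma> \<psi> x v i t =
     - ((norm (v i t))\<^sup>2 / (norm (x i t))\<^sup>2) *\<^sub>R x i t
     + (\<Sum>j=1..N. (1 / real N) *\<^sub>R
          (align_term (\<psi> i j t) (x j t) (x i t) (v j t) - \<psi> i j t *\<^sub>R v i t))
     + (\<Sum>k=1..N. (\<sigma> / real N) *\<^sub>R
          ((norm (x i t))\<^sup>2 *\<^sub>R x k t - (x i t \<bullet> x k t) *\<^sub>R x i t))"

end

theory Submission
  imports Defs
begin

(* Write a_i = <v_i, x_i> and b_i = |x_i|^2, so b_i' = 2 a_i. While x_i does not vanish, the
   curvature term cancels |v_i|^2 in a_i' = |v_i|^2 + <dv_i/dt, x_i>, the sigma-term is tangent to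
   x_i, and <R(x_j, x_i) w, x_i> = |x_i|^2 <w, x_j>; hence near the sphere |a_i'| is bounded by a
   multiple of max_j |a_j|. The defect E = sum_i a_i^2 + (b_i - 1)^2 therefore satisfies
   E' <= C E while E < 1/4, and E(0) = 0 forces E = 0 for all times by a Gronwall argument. *)

lemma outer3_mult_vec: "outer3 a b *v w = (b \<bullet> w) *\<^sub>R a"
  by (simp add: vec_eq_iff outer3_def matrix_vector_mult_def inner_vec_def sum_distrib_left mult_ac)

lemma rotR_mult_vec_inner:
  assumes "x1 \<noteq> x2"
  shows "(rotR x1 x2 *v w) \<bullet> x2 = (x2 \<bullet> x2) * (w \<bullet> x1)"
proof -
  define u where "u = (1 / norm (cross3 x1 x2)) *\<^sub>R cross3 x1 x2"
  have "u \<bullet> x2 = 0"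
    unfolding u_def by (simp add: dot_cross_self)
  moreover have "rotR x1 x2 *v w = (x1 \<bullet> x2) *\<^sub>R w - (x2 \<bullet> w) *\<^sub>R x1 + (x1 \<bullet> w) *\<^sub>R x2
      + ((1 - x1 \<bullet> x2) * (u \<bullet> w)) *\<^sub>R u"
    using assms
    by (simp add: rotR_def u_def[symmetric] matrix_vector_mult_add_rdistrib
        matrix_vector_mult_diff_rdistrib scaleR_matrix_vector_assoc[symmetric] outer3_mult_vec)
  ultimately show ?thesis
    by (simp add: inner_add_left inner_diff_left inner_commute[of w] mult.commute)
qed

lemma align_term_inner_bound:
  assumes "0 \<le> p"
  shows "\<bar>align_term p xj xi vj \<bullet> xi\<bar> \<le> p * max 1 (xi \<bullet> xi) * \<bar>vj \<bullet> xj\<bar>"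
proof -
  consider "xj = - xi" | "xj \<noteq> - xi" "xj = xi" | "xj \<noteq> - xi" "xj \<noteq> xi" by blast
  then show ?thesis
  proof cases
    case 1
    then show ?thesis using assms by (simp add: align_term_def)
  next
    case 2
    then have "align_term p xj xi vj \<bullet> xi = p * (vj \<bullet> xj)"
      by (auto simp: align_term_def rotR_def)
    moreover have "\<bar>vj \<bullet> xj\<bar> \<le> max 1 (xi \<bullet> xi) * \<bar>vj \<bullet> xj\<bar>"
      by (simp add: mult_le_cancel_right1)
    ultimately show ?thesis
      using assms by (simp add: abs_mult mult.assoc mult_left_mono)
  next
    case 3
    then have "align_term p xj xi vj \<bullet> xi = p * (xi \<bullet> xi) * (vj \<bullet> xj)"
      by (simp add: align_term_def rotR_mult_vec_inner)
    then show ?thesis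
      using assms by (simp add: abs_mult mult_left_mono mult_right_mono)
  qed
qed

lemma tangent_projection_sum_inner_eq_0:
  "(\<Sum>k\<in>K. c k *\<^sub>R ((norm y)\<^sup>2 *\<^sub>R z k - (y \<bullet> z k) *\<^sub>R y)) \<bullet> y = 0"
  unfolding inner_sum_left
proof (intro sum.neutral ballI)
  fix k
  have "z k \<bullet> y = y \<bullet> z k" by (rule inner_commute)
  then show "c k *\<^sub>R ((norm y)\<^sup>2 *\<^sub>R z k - (y \<bullet> z k) *\<^sub>R y) \<bullet> y = 0"
    by (simp add: inner_diff_left power2_norm_eq_inner)
qed

lemma vfield_inner_position:
  assumes "x i t \<noteq> 0"
  shows "vfield N \<sigma> \<psi> x v i t \<bullet> x i t = - (v i t \<bullet> v i t)
    + (\<Sum>j=1..N. align_term (\<psi> i j t) (x j t) (x i t) (v j t) \<bullet> x i t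
                 - \<psi> i j t * (v i t \<bullet> x i t)) / real N"
  using assms
  unfolding vfield_def inner_add_left tangent_projection_sum_inner_eq_0
  by (simp add: inner_diff_left inner_sum_left power2_norm_eq_inner sum_divide_distrib)

lemma vfield_inner_position_bound:
  assumes "N \<ge> 1" "i \<in> {1..N}" "x i t \<noteq> 0" "x i t \<bullet> x i t \<le> c" "1 \<le> c"
    and bounds: "\<And>j. j \<in> {1..N} \<Longrightarrow> 0 \<le> \<psi> i j t \<and> \<psi> i j t \<le> M \<and> \<bar>v j t \<bullet> x j t\<bar> \<le> s"
  shows "\<bar>v i t \<bullet> v i t + vfield N \<sigma> \<psi> x v i t \<bullet> x i t\<bar> \<le> (c + 1) * M * s"
proof -
  have term_bound: "\<bar>align_term (\<psi> i j t) (x j t) (x i t) (v j t) \<bullet> x i t - \<psi> i j t * (v i t \<bullet> x i t)\<bar>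
      \<le> (c + 1) * M * s" if j: "j \<in> {1..N}" for j
  proof -
    from bounds[OF j] bounds[OF assms(2)]
    have psi: "0 \<le> \<psi> i j t" "\<psi> i j t \<le> M" and aj: "\<bar>v j t \<bullet> x j t\<bar> \<le> s"
      and ai: "\<bar>v i t \<bullet> x i t\<bar> \<le> s" by auto
    have "\<bar>align_term (\<psi> i j t) (x j t) (x i t) (v j t) \<bullet> x i t\<bar>
        \<le> \<psi> i j t * max 1 (x i t \<bullet> x i t) * \<bar>v j t \<bullet> x j t\<bar>"
      using psi(1) by (rule align_term_inner_bound)
    also have "\<dots> \<le> M * c * s"
      using psi aj assms(4,5) by (intro mult_mono) auto
    finally have "\<bar>align_term (\<psi> i j t) (x j t) (x i t) (v j t) \<bullet> x i t\<bar> \<le> M * c * s" .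
    moreover have "\<bar>\<psi> i j t * (v i t \<bullet> x i t)\<bar> \<le> M * s"
      using psi ai by (simp add: abs_mult mult_mono)
    ultimately show ?thesis
      using abs_triangle_ineq4[of "align_term (\<psi> i j t) (x j t) (x i t) (v j t) \<bullet> x i t"
          "\<psi> i j t * (v i t \<bullet> x i t)"]
      by (simp add: algebra_simps)
  qed
  have "\<bar>v i t \<bullet> v i t + vfield N \<sigma> \<psi> x v i t \<bullet> x i t\<bar>
      = \<bar>\<Sum>j=1..N. align_term (\<psi> i j t) (x j t) (x i t) (v j t) \<bullet> x i t
                 - \<psi> i j t * (v i t \<bullet> x i t)\<bar> / real N"
    using assms(3) by (simp add: vfield_inner_position)
  also have "\<dots> \<le> (\<Sum>j=1..N. (c + 1) * M * s) / real N"
    by (intro divide_right_mono order_trans[OF sum_abs sum_mono] term_bound) auto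
  also have "\<dots> = (c + 1) * M * s"
    using assms(1) by simp
  finally show ?thesis .
qed

definition sphere_defect ::
  "nat \<Rightarrow> (nat \<Rightarrow> real \<Rightarrow> 'a::real_inner) \<Rightarrow> (nat \<Rightarrow> real \<Rightarrow> 'a) \<Rightarrow> real \<Rightarrow> real" where
  "sphere_defect N x v t = (\<Sum>i=1..N. (v i t \<bullet> x i t)\<^sup>2 + (x i t \<bullet> x i t - 1)\<^sup>2)"

lemma sphere_defect_nonneg: "0 \<le> sphere_defect N x v t"
  unfolding sphere_defect_def by (intro sum_nonneg) simp

lemma sphere_defect_eq_0_iff:
  "sphere_defect N x v t = 0 \<longleftrightarrow> (\<forall>i\<in>{1..N}. v i t \<bullet> x i t = 0 \<and> norm (x i t) = 1)"
  unfolding sphere_defect_def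
  by (subst sum_nonneg_eq_0_iff) (auto simp: add_nonneg_eq_0_iff norm_eq_1)

lemma sphere_defect_component_le:
  assumes "i \<in> {1..N}"
  shows "\<bar>v i t \<bullet> x i t\<bar> \<le> sqrt (sphere_defect N x v t)"
    and "\<bar>x i t \<bullet> x i t - 1\<bar> \<le> sqrt (sphere_defect N x v t)"
proof -
  have "(v i t \<bullet> x i t)\<^sup>2 + (x i t \<bullet> x i t - 1)\<^sup>2 \<le> sphere_defect N x v t"
    unfolding sphere_defect_def using assms by (intro member_le_sum) auto
  then have "\<bar>v i t \<bullet> x i t\<bar>\<^sup>2 \<le> sphere_defect N x v t"
    and "\<bar>x i t \<bullet> x i t - 1\<bar>\<^sup>2 \<le> sphere_defect N x v t"
    using zero_le_power2[of "v i t \<bullet> x i t"] zero_le_power2[of "x i t \<bullet> x i t - 1"]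
    unfolding power2_abs by linarith+
  then show "\<bar>v i t \<bullet> x i t\<bar> \<le> sqrt (sphere_defect N x v t)"
    and "\<bar>x i t \<bullet> x i t - 1\<bar> \<le> sqrt (sphere_defect N x v t)"
    by (simp_all add: real_le_rsqrt)
qed

lemma has_real_derivative_sphere_defect:
  assumes "\<And>i. i \<in> {1..N} \<Longrightarrow> (x i has_vector_derivative v i t) (at t within S)"
    and "\<And>i. i \<in> {1..N} \<Longrightarrow> (v i has_vector_derivative w i) (at t within S)"
  shows "(sphere_defect N x v has_real_derivative
      (\<Sum>i=1..N. 2 * (v i t \<bullet> x i t) * (v i t \<bullet> v i t + w i \<bullet> x i t)
                 + 4 * (x i t \<bullet> x i t - 1) * (v i t \<bullet> x i t))) (at t within S)"
proof -
  have "((\<lambda>t. (v i t \<bullet> x i t)\<^sup>2 + (x i t \<bullet> x i t - 1)\<^sup>2) has_real_derivative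
      2 * (v i t \<bullet> x i t) * (v i t \<bullet> v i t + w i \<bullet> x i t)
      + 4 * (x i t \<bullet> x i t - 1) * (v i t \<bullet> x i t)) (at t within S)" if "i \<in> {1..N}" for i
  proof -
    have "((\<lambda>t. v i t \<bullet> x i t) has_real_derivative v i t \<bullet> v i t + w i \<bullet> x i t) (at t within S)"
      using bounded_bilinear.has_vector_derivative[OF bounded_bilinear_inner,
          OF assms(2)[OF that] assms(1)[OF that]]
      by (simp add: has_real_derivative_iff_has_vector_derivative)
    moreover have "((\<lambda>t. x i t \<bullet> x i t) has_real_derivative 2 * (v i t \<bullet> x i t)) (at t within S)"
      using bounded_bilinear.has_vector_derivative[OF bounded_bilinear_inner,
          OF assms(1)[OF that] assms(1)[OF that]]
      by (simp add: has_real_derivative_iff_has_vector_derivative inner_commute)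
    ultimately show ?thesis
      by (auto intro!: derivative_eq_intros simp: algebra_simps)
  qed
  then show ?thesis
    unfolding sphere_defect_def[abs_def] by (rule DERIV_sum)
qed

lemma vfield_sphere_defect_deriv_le:
  assumes "N \<ge> 1" and "M \<ge> 0"
    and psi: "\<And>i j. i \<in> {1..N} \<Longrightarrow> j \<in> {1..N} \<Longrightarrow> 0 \<le> \<psi> i j t \<and> \<psi> i j t \<le> M"
    and small: "sphere_defect N x v t < 1/4"
  shows "(\<Sum>i=1..N. 2 * (v i t \<bullet> x i t) * (v i t \<bullet> v i t + vfield N \<sigma> \<psi> x v i t \<bullet> x i t)
                 + 4 * (x i t \<bullet> x i t - 1) * (v i t \<bullet> x i t))
      \<le> real N * (5 * M + 4) * sphere_defect N x v t"
proof -
  define s where "s = sqrt (sphere_defect N x v t)"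
  have "0 \<le> s" and s2: "s\<^sup>2 = sphere_defect N x v t"
    using sphere_defect_nonneg[of N x v t] by (auto simp: s_def)
  have "s < sqrt (1/4)"
    using small by (simp add: s_def)
  then have "s < 1/2"
    by (simp add: real_sqrt_divide)
  have "2 * (v i t \<bullet> x i t) * (v i t \<bullet> v i t + vfield N \<sigma> \<psi> x v i t \<bullet> x i t)
      + 4 * (x i t \<bullet> x i t - 1) * (v i t \<bullet> x i t) \<le> (5 * M + 4) * s\<^sup>2"
    if i: "i \<in> {1..N}" for i
  proof -
    have ai: "\<bar>v i t \<bullet> x i t\<bar> \<le> s" and bi: "\<bar>x i t \<bullet> x i t - 1\<bar> \<le> s"
      using sphere_defect_component_le[OF i] by (simp_all add: s_def)
    then have "x i t \<noteq> 0" "x i t \<bullet> x i t \<le> 3/2"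
      using \<open>s < 1/2\<close> by auto
    then have "\<bar>v i t \<bullet> v i t + vfield N \<sigma> \<psi> x v i t \<bullet> x i t\<bar> \<le> (3/2 + 1) * M * s"
    proof (rule vfield_inner_position_bound[OF assms(1) i])
      show "1 \<le> (3/2 :: real)" by simp
    next
      fix j assume j: "j \<in> {1..N}"
      show "0 \<le> \<psi> i j t \<and> \<psi> i j t \<le> M \<and> \<bar>v j t \<bullet> x j t\<bar> \<le> s"
        using psi[OF i j] sphere_defect_component_le(1)[OF j] by (simp add: s_def)
    qed
    then have "\<bar>(v i t \<bullet> x i t) * (v i t \<bullet> v i t + vfield N \<sigma> \<psi> x v i t \<bullet> x i t)\<bar>
        \<le> s * (5/2 * M * s)"
      unfolding abs_mult using ai \<open>0 \<le> s\<close> by (intro mult_mono) auto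
    moreover have "\<bar>(x i t \<bullet> x i t - 1) * (v i t \<bullet> x i t)\<bar> \<le> s * s"
      unfolding abs_mult using ai bi \<open>0 \<le> s\<close> by (intro mult_mono) auto
    moreover have "(5 * M + 4) * s\<^sup>2 = 2 * (s * (5/2 * M * s)) + 4 * (s * s)"
      by (simp add: power2_eq_square algebra_simps)
    ultimately show ?thesis
      by linarith
  qed
  then have "(\<Sum>i=1..N. 2 * (v i t \<bullet> x i t) * (v i t \<bullet> v i t + vfield N \<sigma> \<psi> x v i t \<bullet> x i t)
                 + 4 * (x i t \<bullet> x i t - 1) * (v i t \<bullet> x i t))
      \<le> (\<Sum>i=1..N. (5 * M + 4) * s\<^sup>2)"
    by (rule sum_mono)
  then show ?thesis
    by (simp add: s2)
qed

lemma exp_weighted_nonincreasing: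
  fixes f f' :: "real \<Rightarrow> real"
  assumes "a \<le> b"
    and deriv: "\<And>t. t \<in> {a..b} \<Longrightarrow> (f has_real_derivative f' t) (at t within {a..b})"
    and growth: "\<And>t. t \<in> {a..b} \<Longrightarrow> f' t \<le> C * f t"
  shows "exp (- C * b) * f b \<le> exp (- C * a) * f a"
proof -
  define g where "g t = exp (- C * t) * f t" for t
  have dg: "(g has_derivative (*) (exp (- C * t) * (f' t - C * f t))) (at t within {a..b})"
    if "a \<le> t" "t \<le> b" for t
  proof -
    have "(g has_real_derivative exp (- C * t) * (f' t - C * f t)) (at t within {a..b})"
      unfolding g_def[abs_def] using that
      by (auto intro!: derivative_eq_intros deriv simp: algebra_simps)
    then show ?thesis
      by (simp add: has_field_derivative_def)
  qed
  obtain \<xi> where "\<xi> \<in> {a..b}" and "g b - g a = exp (- C * \<xi>) * (f' \<xi> - C * f \<xi>) * (b - a)"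
    using mvt_very_simple[OF \<open>a \<le> b\<close> dg] by auto
  moreover from \<open>\<xi> \<in> {a..b}\<close> have "exp (- C * \<xi>) * (f' \<xi> - C * f \<xi>) \<le> 0"
    using growth by (simp add: mult_nonneg_nonpos)
  ultimately have "g b - g a \<le> 0"
    using \<open>a \<le> b\<close> by (simp add: mult_nonpos_nonneg)
  then show ?thesis
    by (simp add: g_def)
qed

lemma eq_0_if_deriv_le_linear_near_0:
  fixes f f' :: "real \<Rightarrow> real"
  assumes "f 0 = 0" and nonneg: "\<And>t. t \<ge> 0 \<Longrightarrow> 0 \<le> f t"
    and deriv: "\<And>t. t \<ge> 0 \<Longrightarrow> (f has_real_derivative f' t) (at t within {0..})"
    and "\<epsilon> > 0" and growth: "\<And>t. t \<ge> 0 \<Longrightarrow> f t < \<epsilon> \<Longrightarrow> f' t \<le> C * f t"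
    and "t \<ge> 0"
  shows "f t = 0"
proof (rule ccontr)
  assume "f t \<noteq> 0"
  have cont: "continuous_on {0..} f"
    using deriv by (meson DERIV_continuous atLeast_iff continuous_on_eq_continuous_within)
  define Z where "Z = {s \<in> {0..t}. f s = 0}"
  have "closed Z"
    unfolding Z_def
    by (rule continuous_closed_preimage_constant) (auto intro: continuous_on_subset[OF cont])
  moreover have "0 \<in> Z"
    using \<open>f 0 = 0\<close> \<open>t \<ge> 0\<close> by (simp add: Z_def)
  moreover have "bdd_above Z"
    unfolding Z_def by (auto intro: bdd_aboveI[where M = t])
  ultimately have "Sup Z \<in> Z"
    using closed_contains_Sup by blast
  define s where "s = Sup Z"  \<comment> \<open>the last zero before \<open>t\<close>; \<open>f < \<epsilon>\<close> just after it\<close>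
  have s: "0 \<le> s" "s < t" "f s = 0"
    using \<open>Sup Z \<in> Z\<close> \<open>f t \<noteq> 0\<close> by (auto simp: Z_def s_def order.order_iff_strict)
  obtain \<delta> where "\<delta> > 0" and near: "\<And>r. r \<ge> 0 \<Longrightarrow> dist r s < \<delta> \<Longrightarrow> dist (f r) (f s) < \<epsilon>"
    using cont \<open>\<epsilon> > 0\<close> s unfolding continuous_on_iff by (metis atLeast_iff)
  define s' where "s' = min t (s + \<delta>/2)"
  have "s < s'" "s' \<le> t"
    using s \<open>\<delta> > 0\<close> by (auto simp: s'_def)
  have "exp (- C * s') * f s' \<le> exp (- C * s) * f s"
  proof (rule exp_weighted_nonincreasing)
    fix r assume r: "r \<in> {s..s'}"
    then show "(f has_real_derivative f' r) (at r within {s..s'})"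
      using deriv[of r] s by (auto intro: has_field_derivative_subset)
    have "dist r s < \<delta>"
      using r \<open>\<delta> > 0\<close> by (auto simp: dist_real_def s'_def)
    then have "f r < \<epsilon>"
      using near[of r] r s by (auto simp: dist_real_def)
    then show "f' r \<le> C * f r"
      using growth r s by auto
  qed (use \<open>s < s'\<close> in simp)
  then have "f s' = 0"
    using nonneg[of s'] s \<open>s < s'\<close> by (simp add: mult_le_0_iff)
  then have "s' \<le> s"
    unfolding s_def using \<open>s < s'\<close> \<open>s' \<le> t\<close> s \<open>bdd_above Z\<close> by (auto simp: Z_def intro: cSup_upper)
  then show False
    using \<open>s < s'\<close> by simp
qed

theorem proposition3p2:
  fixes N :: nat and \<sigma> :: real
    and \<psi> :: "nat \<Rightarrow> nat \<Rightarrow> real \<Rightarrow> real"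
    and x v :: "nat \<Rightarrow> real \<Rightarrow> real^3"
  assumes "N \<ge> 1" and "\<sigma> \<ge> 0"
    and psi_nonneg: "\<And>i j t. i \<in> {1..N} \<Longrightarrow> j \<in> {1..N} \<Longrightarrow> 0 \<le> \<psi> i j t"
    and psi_bdd: "\<exists>M. \<forall>i\<in>{1..N}. \<forall>j\<in>{1..N}. \<forall>t\<ge>0. \<psi> i j t \<le> M"
    and dx: "\<And>i t. i \<in> {1..N} \<Longrightarrow> t \<ge> 0 \<Longrightarrow>
               (x i has_vector_derivative v i t) (at t within {0..})"
    and dv: "\<And>i t. i \<in> {1..N} \<Longrightarrow> t \<ge> 0 \<Longrightarrow>
               (v i has_vector_derivative vfield N \<sigma> \<psi> x v i t) (at t within {0..})"
    and init_orth: "\<And>i. i \<in> {1..N} \<Longrightarrow> v i 0 \<bullet> x i 0 = 0"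
    and init_norm: "\<And>i. i \<in> {1..N} \<Longrightarrow> norm (x i 0) = 1"
  shows "\<forall>i\<in>{1..N}. \<forall>t>0. v i t \<bullet> x i t = 0 \<and> norm (x i t) = 1"
proof -
  obtain M where "M \<ge> 0"
    and psi_le: "\<And>i j t. i \<in> {1..N} \<Longrightarrow> j \<in> {1..N} \<Longrightarrow> t \<ge> 0 \<Longrightarrow> \<psi> i j t \<le> M"
    using psi_bdd by (metis atLeastAtMost_iff max.cobounded2 max.coboundedI1)
  define D where "D t = (\<Sum>i=1..N. 2 * (v i t \<bullet> x i t) * (v i t \<bullet> v i t + vfield N \<sigma> \<psi> x v i t \<bullet> x i t)
                 + 4 * (x i t \<bullet> x i t - 1) * (v i t \<bullet> x i t))" for t
  have "sphere_defect N x v t = 0" if "t \<ge> 0" for t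
  proof (rule eq_0_if_deriv_le_linear_near_0[where f = "sphere_defect N x v" and f' = D
        and \<epsilon> = "1/4" and C = "real N * (5 * M + 4)"])
    show "sphere_defect N x v 0 = 0"
      using init_orth init_norm by (simp add: sphere_defect_eq_0_iff)
    show "(sphere_defect N x v has_real_derivative D t) (at t within {0..})" if "t \<ge> 0" for t
      unfolding D_def using dx dv that by (intro has_real_derivative_sphere_defect)
    show "D t \<le> real N * (5 * M + 4) * sphere_defect N x v t"
      if "t \<ge> 0" "sphere_defect N x v t < 1/4" for t
      unfolding D_def using that \<open>N \<ge> 1\<close> \<open>M \<ge> 0\<close> psi_nonneg psi_le
      by (intro vfield_sphere_defect_deriv_le) auto
  qed (use that sphere_defect_nonneg in auto)
  then show ?thesis
    by (simp add: sphere_defect_eq_0_iff)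
qed

end
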